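(* Let $R$ be a Noetherian ring, $q\in R^\times$ a central unit, and $(\sigma,\delta)$ a $q$-skew derivation on $R$. Let $N$ be a $\sigma$-ideal of $R$, and suppose there is a positive integer $n$ such that $\delta^n(N^n)=0$ and $\{n!\}_q$ is invertible in $R$. Then $\delta(N)^n\subseteq N$. In particular, if $N$ is the prime radical of $R$, then $\delta(N)\subseteq N$.
   Context: A skew derivation is a pair $(\sigma,\delta)$ with $\sigma$ a ring automorphism and $\delta$ additive with $\delta(ab)=\delta(a)b+\sigma(a)\delta(b)$. It is a $q$-skew derivation if $\delta\sigma=q\sigma\delta$, $\sigma(q)=q$ and $\delta(q)=0$. A $\sigma$-ideal is a two-sided ideal $I$ with $\sigma(I)\subseteq I$. $\{n!\}_q:=(1)(1+q)(1+q+q^2)\cdots(1+q+\cdots+q^{n-1})\in R$. $\delta(N)^n$ denotes the set of all products $\delta(s_1)\cdots\delta(s_n)$ with $s_i\in N$ (and their sums). The prime radical of $R$ is the intersection of all prime ideals of $R$. *)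

theory Defs
  imports Main
begin

definition left_ideal :: "'a::ring_1 set \<Rightarrow> bool" where
  "left_ideal I \<longleftrightarrow> 0 \<in> I \<and> (\<forall>a\<in>I. \<forall>b\<in>I. a + b \<in> I \<and> - a \<in> I) \<and>
     (\<forall>r. \<forall>a\<in>I. r * a \<in> I)"

definition right_ideal :: "'a::ring_1 set \<Rightarrow> bool" where
  "right_ideal I \<longleftrightarrow> 0 \<in> I \<and> (\<forall>a\<in>I. \<forall>b\<in>I. a + b \<in> I \<and> - a \<in> I) \<and>
     (\<forall>r. \<forall>a\<in>I. a * r \<in> I)"

definition two_sided_ideal :: "'a::ring_1 set \<Rightarrow> bool" where
  "two_sided_ideal I \<longleftrightarrow> left_ideal I \<and> right_ideal I"

definition noetherian_ring :: "'a::ring_1 itself \<Rightarrow> bool" where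
  "noetherian_ring _ \<longleftrightarrow>
     (\<forall>I :: nat \<Rightarrow> 'a set. (\<forall>k. left_ideal (I k)) \<and> mono I \<longrightarrow> (\<exists>m. \<forall>k\<ge>m. I k = I m)) \<and>
     (\<forall>I :: nat \<Rightarrow> 'a set. (\<forall>k. right_ideal (I k)) \<and> mono I \<longrightarrow> (\<exists>m. \<forall>k\<ge>m. I k = I m))"

definition ring_unit :: "'a::ring_1 \<Rightarrow> bool" where
  "ring_unit u \<longleftrightarrow> (\<exists>v. u * v = 1 \<and> v * u = 1)"

definition central :: "'a::ring_1 \<Rightarrow> bool" where
  "central c \<longleftrightarrow> (\<forall>a. c * a = a * c)"

definition ring_automorphism :: "('a::ring_1 \<Rightarrow> 'a) \<Rightarrow> bool" where
  "ring_automorphism \<sigma> \<longleftrightarrow> bij \<sigma> \<and> (\<forall>a b. \<sigma> (a + b) = \<sigma> a + \<sigma> b) \<and>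
     (\<forall>a b. \<sigma> (a * b) = \<sigma> a * \<sigma> b) \<and> \<sigma> 1 = 1"

definition skew_derivation :: "('a::ring_1 \<Rightarrow> 'a) \<Rightarrow> ('a \<Rightarrow> 'a) \<Rightarrow> bool" where
  "skew_derivation \<sigma> \<delta> \<longleftrightarrow> ring_automorphism \<sigma> \<and> (\<forall>a b. \<delta> (a + b) = \<delta> a + \<delta> b) \<and>
     (\<forall>a b. \<delta> (a * b) = \<delta> a * b + \<sigma> a * \<delta> b)"

definition q_skew_derivation :: "'a::ring_1 \<Rightarrow> ('a \<Rightarrow> 'a) \<Rightarrow> ('a \<Rightarrow> 'a) \<Rightarrow> bool" where
  "q_skew_derivation q \<sigma> \<delta> \<longleftrightarrow> skew_derivation \<sigma> \<delta> \<and>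
     (\<forall>a. \<delta> (\<sigma> a) = q * \<sigma> (\<delta> a)) \<and> \<sigma> q = q \<and> \<delta> q = 0"

definition sigma_ideal :: "('a::ring_1 \<Rightarrow> 'a) \<Rightarrow> 'a set \<Rightarrow> bool" where
  "sigma_ideal \<sigma> I \<longleftrightarrow> two_sided_ideal I \<and> \<sigma> ` I \<subseteq> I"

inductive_set add_closure :: "'a::ring_1 set \<Rightarrow> 'a set" for S where
  zero: "0 \<in> add_closure S"
| elem: "s \<in> S \<Longrightarrow> s \<in> add_closure S"
| add: "a \<in> add_closure S \<Longrightarrow> b \<in> add_closure S \<Longrightarrow> a + b \<in> add_closure S"

definition ideal_power :: "'a::ring_1 set \<Rightarrow> nat \<Rightarrow> 'a set" where
  "ideal_power N n = add_closure {prod_list xs | xs. length xs = n \<and> set xs \<subseteq> N}"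

definition image_power :: "('a::ring_1 \<Rightarrow> 'a) \<Rightarrow> 'a set \<Rightarrow> nat \<Rightarrow> 'a set" where
  "image_power \<delta> N n = add_closure {prod_list (map \<delta> xs) | xs. length xs = n \<and> set xs \<subseteq> N}"

definition q_factorial :: "'a::ring_1 \<Rightarrow> nat \<Rightarrow> 'a" where
  "q_factorial q n = prod_list (map (\<lambda>i. \<Sum>j<i. q ^ j) [1..<Suc n])"

definition prime_ideal :: "'a::ring_1 set \<Rightarrow> bool" where
  "prime_ideal P \<longleftrightarrow> two_sided_ideal P \<and> P \<noteq> UNIV \<and>
     (\<forall>A B. two_sided_ideal A \<and> two_sided_ideal B \<and> (\<forall>a\<in>A. \<forall>b\<in>B. a * b \<in> P)
        \<longrightarrow> A \<subseteq> P \<or> B \<subseteq> P)"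

definition prime_radical :: "'a::ring_1 set" where
  "prime_radical = \<Inter> {P. prime_ideal P}"

end

theory Submission
  imports Defs "HOL.Modules"
begin

text \<open>
  As \<open>N\<close> is a \<open>\<sigma>\<close>-ideal of a Noetherian ring, the ascending chain of left ideals
  \<open>\<sigma>\<^sup>-\<^sup>k(N)\<close> stabilises, which forces \<open>\<sigma>(N) = N\<close>.
  In the \<open>q\<close>-Leibniz expansion
  \<open>\<delta>\<^sup>m(a b) = \<Sum>\<^sub>i [m choose i]\<^sub>q \<sigma>\<^sup>m\<^sup>-\<^sup>i(\<delta>\<^sup>i a) \<delta>\<^sup>m\<^sup>-\<^sup>i b\<close>
  of \<open>\<delta>\<^sup>n(x\<^sub>1 \<cdots> x\<^sub>n)\<close> with all \<open>x\<^sub>i \<in> N\<close>, every term but one keeps a factor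
  from \<open>N\<close>; hence \<open>\<delta>\<^sup>n(x\<^sub>1 \<cdots> x\<^sub>n)\<close> is congruent modulo \<open>N\<close> to \<open>{n!}\<^sub>q\<close> times
  the twisted product \<open>\<sigma>\<^sup>n\<^sup>-\<^sup>1(\<delta> x\<^sub>1) \<cdots> \<sigma>(\<delta> x\<^sub>n\<^sub>-\<^sub>1) \<delta> x\<^sub>n\<close>.
  The left side vanishes and \<open>{n!}\<^sub>q\<close> is a unit, so twisted products lie in \<open>N\<close>; since
  \<open>\<sigma>(N) = N\<close> and \<open>\<delta> \<sigma>\<^sup>k = q\<^sup>k \<sigma>\<^sup>k \<delta>\<close>, every product \<open>\<delta>(s\<^sub>1) \<cdots> \<delta>(s\<^sub>n)\<close>
  with \<open>s\<^sub>i \<in> N\<close> is a power of \<open>q\<close> times a twisted product.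

  If \<open>N \<subseteq> P\<close> for a prime \<open>P\<close> but \<open>\<delta> c \<notin> P\<close> for some \<open>c \<in> N\<close>, then the identity
  \<open>y r \<delta>(c) = y \<delta>(\<sigma>\<^sup>-\<^sup>1(r) c) - y \<delta>(\<sigma>\<^sup>-\<^sup>1(r)) c\<close> shows that primality strips
  the factors of \<open>\<delta>(N)\<^sup>n \<subseteq> P\<close> one at a time, until \<open>1 \<in> P\<close>.
\<close>

lemma left_ideal_zero: "left_ideal I \<Longrightarrow> 0 \<in> I"
  unfolding left_ideal_def by blast

lemma left_ideal_add: "left_ideal I \<Longrightarrow> a \<in> I \<Longrightarrow> b \<in> I \<Longrightarrow> a + b \<in> I"
  unfolding left_ideal_def by blast

lemma left_ideal_minus: "left_ideal I \<Longrightarrow> a \<in> I \<Longrightarrow> - a \<in> I"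
  unfolding left_ideal_def by blast

lemma left_ideal_diff: "left_ideal I \<Longrightarrow> a \<in> I \<Longrightarrow> b \<in> I \<Longrightarrow> a - b \<in> I"
  by (metis diff_conv_add_uminus left_ideal_add left_ideal_minus)

lemma left_ideal_mult_left: "left_ideal I \<Longrightarrow> a \<in> I \<Longrightarrow> r * a \<in> I"
  unfolding left_ideal_def by blast

lemma left_ideal_sum: "left_ideal I \<Longrightarrow> (\<And>i. i \<in> A \<Longrightarrow> f i \<in> I) \<Longrightarrow> sum f A \<in> I"
  by (induction A rule: infinite_finite_induct) (auto intro: left_ideal_zero left_ideal_add)

lemma add_closure_subset_left_ideal: "left_ideal I \<Longrightarrow> S \<subseteq> I \<Longrightarrow> add_closure S \<subseteq> I"
proof
  show "x \<in> I" if "left_ideal I" "S \<subseteq> I" "x \<in> add_closure S" for x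
    using that(3) by induction (use that in \<open>auto intro: left_ideal_zero left_ideal_add\<close>)
qed

lemma two_sided_ideal_left_ideal: "two_sided_ideal I \<Longrightarrow> left_ideal I"
  unfolding two_sided_ideal_def by blast

lemma two_sided_ideal_mult_right: "two_sided_ideal I \<Longrightarrow> a \<in> I \<Longrightarrow> a * r \<in> I"
  unfolding two_sided_ideal_def right_ideal_def by blast

lemma two_sided_idealI:
  assumes "0 \<in> I" "\<And>a b. a \<in> I \<Longrightarrow> b \<in> I \<Longrightarrow> a + b \<in> I" "\<And>a. a \<in> I \<Longrightarrow> - a \<in> I"
    and "\<And>a r. a \<in> I \<Longrightarrow> r * a \<in> I" "\<And>a r. a \<in> I \<Longrightarrow> a * r \<in> I"
  shows "two_sided_ideal I"
  unfolding two_sided_ideal_def left_ideal_def right_ideal_def using assms by simp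

lemma two_sided_ideal_left_annihilator:
  assumes "two_sided_ideal P"
  shows "two_sided_ideal {y. \<forall>z\<in>S. \<forall>r. y * r * z \<in> P}"
proof (rule two_sided_idealI)
  have P: "left_ideal P" using assms by (rule two_sided_ideal_left_ideal)
  show "0 \<in> {y. \<forall>z\<in>S. \<forall>r. y * r * z \<in> P}"
    using left_ideal_zero[OF P] by simp
  show "a + b \<in> {y. \<forall>z\<in>S. \<forall>r. y * r * z \<in> P}"
    if "a \<in> {y. \<forall>z\<in>S. \<forall>r. y * r * z \<in> P}" "b \<in> {y. \<forall>z\<in>S. \<forall>r. y * r * z \<in> P}" for a b
    using that left_ideal_add[OF P] by (simp add: distrib_right)
  show "- a \<in> {y. \<forall>z\<in>S. \<forall>r. y * r * z \<in> P}" if "a \<in> {y. \<forall>z\<in>S. \<forall>r. y * r * z \<in> P}" for a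
    using that left_ideal_minus[OF P] by simp
  show "r * a \<in> {y. \<forall>z\<in>S. \<forall>r. y * r * z \<in> P}" if "a \<in> {y. \<forall>z\<in>S. \<forall>r. y * r * z \<in> P}" for a r
    using that left_ideal_mult_left[OF P] by (simp add: mult.assoc)
  show "a * r \<in> {y. \<forall>z\<in>S. \<forall>r. y * r * z \<in> P}" if "a \<in> {y. \<forall>z\<in>S. \<forall>r. y * r * z \<in> P}" for a r
  proof (intro CollectI ballI allI)
    fix z r' assume "z \<in> S"
    then have "a * (r * r') * z \<in> P" using that by blast
    then show "a * r * r' * z \<in> P" by (simp add: mult.assoc)
  qed
qed

lemma two_sided_ideal_right_annihilator:
  assumes "two_sided_ideal P"
  shows "two_sided_ideal {z. \<forall>y\<in>S. \<forall>r. y * r * z \<in> P}"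
proof (rule two_sided_idealI)
  have P: "left_ideal P" using assms by (rule two_sided_ideal_left_ideal)
  show "0 \<in> {z. \<forall>y\<in>S. \<forall>r. y * r * z \<in> P}"
    using left_ideal_zero[OF P] by simp
  show "a + b \<in> {z. \<forall>y\<in>S. \<forall>r. y * r * z \<in> P}"
    if "a \<in> {z. \<forall>y\<in>S. \<forall>r. y * r * z \<in> P}" "b \<in> {z. \<forall>y\<in>S. \<forall>r. y * r * z \<in> P}" for a b
    using that left_ideal_add[OF P] by (simp add: distrib_left)
  show "- a \<in> {z. \<forall>y\<in>S. \<forall>r. y * r * z \<in> P}" if "a \<in> {z. \<forall>y\<in>S. \<forall>r. y * r * z \<in> P}" for a
    using that left_ideal_minus[OF P] by simp
  show "r * a \<in> {z. \<forall>y\<in>S. \<forall>r. y * r * z \<in> P}" if "a \<in> {z. \<forall>y\<in>S. \<forall>r. y * r * z \<in> P}" for a r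
  proof (intro CollectI ballI allI)
    fix y r' assume "y \<in> S"
    then have "y * (r' * r) * a \<in> P" using that by blast
    then show "y * r' * (r * a) \<in> P" by (simp add: mult.assoc)
  qed
  show "a * r \<in> {z. \<forall>y\<in>S. \<forall>r. y * r * z \<in> P}" if "a \<in> {z. \<forall>y\<in>S. \<forall>r. y * r * z \<in> P}" for a r
  proof (intro CollectI ballI allI)
    fix y r' assume "y \<in> S"
    then have "y * r' * a * r \<in> P" using that two_sided_ideal_mult_right[OF assms] by blast
    then show "y * r' * (a * r) \<in> P" by (simp add: mult.assoc)
  qed
qed

lemma prime_ideal_elementwise:
  assumes "prime_ideal P" and "\<And>r. a * r * b \<in> P"
  shows "a \<in> P \<or> b \<in> P"
proof -
  define A where "A = {y. \<forall>z\<in>{b}. \<forall>r. y * r * z \<in> P}"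
  define B where "B = {z. \<forall>y\<in>A. \<forall>r. y * r * z \<in> P}"
  have P: "two_sided_ideal P"
    and prime: "\<And>A B. two_sided_ideal A \<Longrightarrow> two_sided_ideal B \<Longrightarrow> \<forall>y\<in>A. \<forall>z\<in>B. y * z \<in> P
      \<Longrightarrow> A \<subseteq> P \<or> B \<subseteq> P"
    using assms(1) unfolding prime_ideal_def by blast+
  have "A \<subseteq> P \<or> B \<subseteq> P"
  proof (rule prime)
    show "two_sided_ideal A" unfolding A_def using P by (rule two_sided_ideal_left_annihilator)
    show "two_sided_ideal B" unfolding B_def using P by (rule two_sided_ideal_right_annihilator)
    show "\<forall>y\<in>A. \<forall>z\<in>B. y * z \<in> P"
    proof (intro ballI)
      fix y z assume "y \<in> A" "z \<in> B"
      then have "y * 1 * z \<in> P" unfolding B_def by blast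
      then show "y * z \<in> P" by simp
    qed
  qed
  moreover have "a \<in> A" "b \<in> B" using assms(2) unfolding A_def B_def by auto
  ultimately show ?thesis by blast
qed

lemma ring_automorphism_additive: "ring_automorphism f \<Longrightarrow> additive f"
  unfolding ring_automorphism_def additive_def by blast

lemma ring_automorphism_funpow:
  assumes "ring_automorphism f"
  shows "ring_automorphism (f ^^ k)"
proof -
  have "(f ^^ k) (a + b) = (f ^^ k) a + (f ^^ k) b \<and> (f ^^ k) (a * b) = (f ^^ k) a * (f ^^ k) b
      \<and> (f ^^ k) 1 = 1" for a b
    using assms unfolding ring_automorphism_def by (induction k) auto
  then show ?thesis using assms unfolding ring_automorphism_def by simp
qed

lemma left_ideal_vimage:
  assumes f: "ring_automorphism f" and I: "left_ideal I"
  shows "left_ideal (f -` I)"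
proof -
  interpret additive f using f by (rule ring_automorphism_additive)
  show ?thesis
    using f I unfolding left_ideal_def ring_automorphism_def by (auto simp: zero minus)
qed

lemma funpow_image_eq: "f ` N = N \<Longrightarrow> (f ^^ k) ` N = N"
proof (induction k)
  case (Suc k)
  have "(f ^^ Suc k) ` N = f ` (f ^^ k) ` N" by (simp add: image_comp)
  then show ?case using Suc by simp
qed simp

lemma funpow_image_subset: "f ` N \<subseteq> N \<Longrightarrow> x \<in> N \<Longrightarrow> (f ^^ k) x \<in> N"
  by (induction k) auto

lemma noetherian_ring_automorphism_image_eq:
  assumes noeth: "noetherian_ring TYPE('a::ring_1)" and \<sigma>: "ring_automorphism (\<sigma> :: 'a \<Rightarrow> 'a)"
    and N: "left_ideal N" and \<sigma>N: "\<sigma> ` N \<subseteq> N"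
  shows "\<sigma> ` N = N"
proof
  define I where "I k = (\<sigma> ^^ k) -` N" for k
  have "\<forall>k. left_ideal (I k)"
    unfolding I_def using ring_automorphism_funpow[OF \<sigma>] N left_ideal_vimage by blast
  moreover have "mono I"
    unfolding mono_iff_le_Suc I_def using \<sigma>N by auto
  ultimately obtain m where m: "\<forall>k\<ge>m. I k = I m"
    using noeth[unfolded noetherian_ring_def, THEN conjunct1, rule_format, of I] by blast
  show "N \<subseteq> \<sigma> ` N"
  proof
    fix t assume "t \<in> N"
    have "surj (\<sigma> ^^ Suc m)"
      using ring_automorphism_funpow[OF \<sigma>, of "Suc m"] bij_is_surj unfolding ring_automorphism_def by blast
    then obtain w where w: "t = (\<sigma> ^^ Suc m) w" by (rule surjE)
    then have "w \<in> I (Suc m)" using \<open>t \<in> N\<close> by (simp add: I_def)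
    then have "w \<in> I m" using m[rule_format, of "Suc m"] by simp
    then have "(\<sigma> ^^ m) w \<in> N" by (simp add: I_def)
    moreover have "\<sigma> ((\<sigma> ^^ m) w) = t" using w by simp
    ultimately show "t \<in> \<sigma> ` N" by blast
  qed
qed (use \<sigma>N in blast)

fun q_binomial :: "'a::ring_1 \<Rightarrow> nat \<Rightarrow> nat \<Rightarrow> 'a" where
  "q_binomial q m 0 = 1"
| "q_binomial q 0 (Suc i) = 0"
| "q_binomial q (Suc m) (Suc i) = q_binomial q m (Suc i) + q ^ (m - i) * q_binomial q m i"

lemma q_binomial_eq_0: "m < i \<Longrightarrow> q_binomial q m i = 0"
  by (induction q m i rule: q_binomial.induct) auto

lemma q_binomial_self: "q_binomial q m m = 1"
  by (induction m) (auto simp: q_binomial_eq_0)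

lemma q_binomial_Suc_self: "q_binomial q (Suc m) m = (\<Sum>j<Suc m. q ^ j)"
proof (induction m)
  case (Suc m)
  have "q_binomial q (Suc (Suc m)) (Suc m) = 1 + q * (\<Sum>j<Suc m. q ^ j)"
    by (simp add: q_binomial_self Suc)
  also have "\<dots> = (\<Sum>j<Suc (Suc m). q ^ j)"
  proof -
    have "q * (\<Sum>j<Suc m. q ^ j) = (\<Sum>j<Suc m. q ^ Suc j)"
      by (simp only: sum_distrib_left power_Suc)
    then show ?thesis by (simp only: sum.lessThan_Suc_shift[of "\<lambda>j. q ^ j" "Suc m"] power_0)
  qed
  finally show ?case .
qed simp

lemma q_factorial_Suc: "q_factorial q (Suc n) = q_factorial q n * (\<Sum>j<Suc n. q ^ j)"
  by (simp add: q_factorial_def)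

fun twisted_product :: "('a::ring_1 \<Rightarrow> 'a) \<Rightarrow> ('a \<Rightarrow> 'a) \<Rightarrow> 'a list \<Rightarrow> 'a" where
  "twisted_product \<sigma> \<delta> [] = 1"
| "twisted_product \<sigma> \<delta> (x # xs) = (\<sigma> ^^ length xs) (\<delta> x) * twisted_product \<sigma> \<delta> xs"

locale sigma_derivation =
  fixes \<sigma> \<delta> :: "'a::ring_1 \<Rightarrow> 'a"
  assumes skew_derivation: "skew_derivation \<sigma> \<delta>"
begin

lemma ring_automorphism_sigma: "ring_automorphism \<sigma>"
  using skew_derivation unfolding skew_derivation_def by blast

sublocale sigma: additive \<sigma>
  using ring_automorphism_sigma by (rule ring_automorphism_additive)

sublocale delta: additive \<delta>
  using skew_derivation unfolding skew_derivation_def additive_def by blast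

lemma sigma_mult: "\<sigma> (a * b) = \<sigma> a * \<sigma> b"
  using ring_automorphism_sigma unfolding ring_automorphism_def by blast

lemma sigma_one: "\<sigma> 1 = 1"
  using ring_automorphism_sigma unfolding ring_automorphism_def by blast

lemma surj_sigma: "surj \<sigma>"
  using ring_automorphism_sigma unfolding ring_automorphism_def by (simp add: bij_is_surj)

lemma delta_mult: "\<delta> (a * b) = \<delta> a * b + \<sigma> a * \<delta> b"
  using skew_derivation unfolding skew_derivation_def by blast

lemma twisted_product_snoc:
  "twisted_product \<sigma> \<delta> (xs @ [x]) = \<sigma> (twisted_product \<sigma> \<delta> xs) * \<delta> x"
  by (induction xs) (simp_all add: sigma_one sigma_mult mult.assoc)

lemma image_power_subset_prime_ideal_pred:
  assumes P: "prime_ideal P" and N: "left_ideal N" "N \<subseteq> P" and c: "c \<in> N" "\<delta> c \<notin> P"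
    and Suc: "image_power \<delta> N (Suc j) \<subseteq> P"
  shows "image_power \<delta> N j \<subseteq> P"
proof -
  have P': "left_ideal P"
    using P two_sided_ideal_left_ideal unfolding prime_ideal_def by blast
  have "y \<in> P" if y: "y = prod_list (map \<delta> xs)" "length xs = j" "set xs \<subseteq> N" for y xs
  proof -
    have "y * r * \<delta> c \<in> P" for r
    proof -
      obtain r' where r': "r = \<sigma> r'" using surj_sigma by blast
      have "y * \<delta> (r' * c) = prod_list (map \<delta> (xs @ [r' * c]))" using y(1) by simp
      also have "\<dots> \<in> image_power \<delta> N (Suc j)"
        unfolding image_power_def using y c left_ideal_mult_left[OF N(1)]
        by (intro add_closure.elem CollectI exI[of _ "xs @ [r' * c]"]) auto
      finally have "y * \<delta> (r' * c) \<in> P" using Suc by blast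
      moreover have "y * (\<delta> r' * c) \<in> P"
        using c N left_ideal_mult_left by blast
      moreover have "y * r * \<delta> c = y * \<delta> (r' * c) - y * (\<delta> r' * c)"
        using r' by (simp add: delta_mult algebra_simps)
      ultimately show ?thesis using left_ideal_diff[OF P'] by simp
    qed
    then show "y \<in> P" using prime_ideal_elementwise[OF P] c(2) by blast
  qed
  then show ?thesis
    unfolding image_power_def by (intro add_closure_subset_left_ideal[OF P']) blast
qed

lemma delta_image_subset_prime_ideal:
  assumes P: "prime_ideal P" and N: "left_ideal N" "N \<subseteq> P" and powers: "image_power \<delta> N n \<subseteq> P"
  shows "\<delta> ` N \<subseteq> P"
proof (rule ccontr)
  assume "\<not> \<delta> ` N \<subseteq> P"
  then obtain c where c: "c \<in> N" "\<delta> c \<notin> P" by blast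
  have "image_power \<delta> N 0 \<subseteq> P"
    using powers
  proof (induction n)
    case (Suc n)
    then show ?case using image_power_subset_prime_ideal_pred[OF P N c] by blast
  qed
  moreover have "1 \<in> image_power \<delta> N 0"
    unfolding image_power_def by (intro add_closure.elem CollectI exI[of _ "[]"]) simp
  moreover have "left_ideal P"
    using P two_sided_ideal_left_ideal unfolding prime_ideal_def by blast
  ultimately have "r * 1 \<in> P" for r
    using left_ideal_mult_left by blast
  then show False using P unfolding prime_ideal_def by auto
qed

end

locale q_sigma_derivation =
  fixes q :: "'a::ring_1" and \<sigma> \<delta> :: "'a \<Rightarrow> 'a"
  assumes q_skew_derivation: "q_skew_derivation q \<sigma> \<delta>" and central_q: "central q"
begin

sublocale sigma_derivation \<sigma> \<delta>
  using q_skew_derivation unfolding q_skew_derivation_def by unfold_locales blast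

lemma delta_sigma: "\<delta> (\<sigma> a) = q * \<sigma> (\<delta> a)"
  using q_skew_derivation unfolding q_skew_derivation_def by blast

definition central_constant :: "'a \<Rightarrow> bool" where
  "central_constant z \<longleftrightarrow> central z \<and> \<sigma> z = z \<and> \<delta> z = 0"

lemma central_constant_q: "central_constant q"
  using q_skew_derivation central_q unfolding q_skew_derivation_def central_constant_def by blast

lemma central_constant_0: "central_constant 0"
  by (simp add: central_constant_def central_def sigma.zero delta.zero)

lemma central_constant_1: "central_constant 1"
  using delta_mult[of 1 1] by (simp add: central_constant_def central_def sigma_one)

lemma central_constant_add: "central_constant x \<Longrightarrow> central_constant y \<Longrightarrow> central_constant (x + y)"
  by (simp add: central_constant_def central_def sigma.add delta.add distrib_left distrib_right)

lemma central_constant_mult: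
  assumes "central_constant x" "central_constant y"
  shows "central_constant (x * y)"
proof -
  have cx: "x * a = a * x" and cy: "y * a = a * y" for a
    using assms unfolding central_constant_def central_def by blast+
  have "x * y * a = a * (x * y)" for a
  proof -
    have "x * y * a = x * (a * y)" by (simp add: mult.assoc cy[of a])
    also have "\<dots> = a * (x * y)" by (simp add: mult.assoc[symmetric] cx[of a])
    finally show ?thesis .
  qed
  then have "central (x * y)" unfolding central_def by blast
  then show ?thesis
    using assms unfolding central_constant_def by (simp add: sigma_mult delta_mult)
qed

lemma central_constant_power: "central_constant x \<Longrightarrow> central_constant (x ^ k)"
  by (induction k) (simp_all add: central_constant_1 central_constant_mult)

lemma central_constant_sum: "(\<And>i. i \<in> A \<Longrightarrow> central_constant (f i)) \<Longrightarrow> central_constant (sum f A)"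
  by (induction A rule: infinite_finite_induct) (simp_all add: central_constant_0 central_constant_add)

lemma central_constant_prod_list:
  "(\<And>x. x \<in> set xs \<Longrightarrow> central_constant x) \<Longrightarrow> central_constant (prod_list xs)"
  by (induction xs) (simp_all add: central_constant_1 central_constant_mult)

lemma central_constant_q_power_sum: "central_constant (\<Sum>j<m. q ^ j)"
  by (intro central_constant_sum central_constant_power central_constant_q)

lemma central_constant_q_binomial: "central_constant (q_binomial q m i)"
proof (induction m arbitrary: i)
  case 0
  show ?case by (cases i) (simp_all add: central_constant_0 central_constant_1)
next
  case (Suc m)
  show ?case
    by (cases i) (simp_all add: Suc central_constant_1 central_constant_add central_constant_mult
        central_constant_power central_constant_q)
qed

lemma central_constant_q_factorial: "central_constant (q_factorial q n)"
  unfolding q_factorial_def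
  by (rule central_constant_prod_list) (auto simp: central_constant_q_power_sum)

lemma central_constant_commute: "central_constant c \<Longrightarrow> c * a = a * c"
  unfolding central_constant_def central_def by blast

lemma sigma_central_constant_mult: "central_constant c \<Longrightarrow> \<sigma> (c * a) = c * \<sigma> a"
  unfolding central_constant_def by (simp add: sigma_mult)

lemma delta_central_constant_mult: "central_constant c \<Longrightarrow> \<delta> (c * a) = c * \<delta> a"
  unfolding central_constant_def by (simp add: delta_mult)

lemma delta_funpow_sigma: "\<delta> ((\<sigma> ^^ j) x) = q ^ j * (\<sigma> ^^ j) (\<delta> x)"
proof (induction j)
  case (Suc j)
  have "\<delta> ((\<sigma> ^^ Suc j) x) = q * \<sigma> (q ^ j * (\<sigma> ^^ j) (\<delta> x))"
    by (simp add: delta_sigma Suc)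
  also have "\<dots> = q ^ Suc j * (\<sigma> ^^ Suc j) (\<delta> x)"
    by (simp add: sigma_central_constant_mult central_constant_power central_constant_q mult.assoc)
  finally show ?case .
qed simp

lemma delta_central_constant_funpow_sigma_mult:
  assumes "central_constant c"
  shows "\<delta> (c * (\<sigma> ^^ k) u * v) = q ^ k * c * (\<sigma> ^^ k) (\<delta> u) * v + c * (\<sigma> ^^ Suc k) u * \<delta> v"
proof -
  have "\<delta> (c * (\<sigma> ^^ k) u * v) = c * (q ^ k * (\<sigma> ^^ k) (\<delta> u) * v + (\<sigma> ^^ Suc k) u * \<delta> v)"
    using delta_central_constant_mult[OF assms, of "(\<sigma> ^^ k) u * v"]
    by (simp add: delta_mult delta_funpow_sigma mult.assoc)
  also have "\<dots> = q ^ k * c * (\<sigma> ^^ k) (\<delta> u) * v + c * (\<sigma> ^^ Suc k) u * \<delta> v"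
    using central_constant_commute[OF assms, of "q ^ k"] by (simp add: distrib_left mult.assoc[symmetric])
  finally show ?thesis .
qed

lemma q_leibniz:
  "(\<delta> ^^ m) (a * b) = (\<Sum>i\<le>m. q_binomial q m i * (\<sigma> ^^ (m - i)) ((\<delta> ^^ i) a) * (\<delta> ^^ (m - i)) b)"
proof (induction m)
  case (Suc m)
  define T where "T i = (\<sigma> ^^ (Suc m - i)) ((\<delta> ^^ i) a) * (\<delta> ^^ (Suc m - i)) b" for i
  have shift: "(\<Sum>i\<le>m. q_binomial q m i * T i) = T 0 + (\<Sum>i\<le>m. q_binomial q m (Suc i) * T (Suc i))"
  proof -
    have "(\<Sum>i\<le>m. q_binomial q m i * T i) = (\<Sum>i\<le>Suc m. q_binomial q m i * T i)"
      by (simp add: q_binomial_eq_0)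
    also have "\<dots> = T 0 + (\<Sum>i\<le>m. q_binomial q m (Suc i) * T (Suc i))"
      by (simp only: sum.atMost_Suc_shift q_binomial.simps(1) mult_1_left)
    finally show ?thesis .
  qed
  have "(\<delta> ^^ Suc m) (a * b)
      = (\<Sum>i\<le>m. \<delta> (q_binomial q m i * (\<sigma> ^^ (m - i)) ((\<delta> ^^ i) a) * (\<delta> ^^ (m - i)) b))"
    by (simp add: Suc delta.sum)
  also have "\<dots> = (\<Sum>i\<le>m. q ^ (m - i) * q_binomial q m i * T (Suc i) + q_binomial q m i * T i)"
  proof (rule sum.cong)
    fix i assume "i \<in> {..m}"
    then have "Suc m - i = Suc (m - i)" by auto
    then show "\<delta> (q_binomial q m i * (\<sigma> ^^ (m - i)) ((\<delta> ^^ i) a) * (\<delta> ^^ (m - i)) b)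
        = q ^ (m - i) * q_binomial q m i * T (Suc i) + q_binomial q m i * T i"
      unfolding T_def
      using delta_central_constant_funpow_sigma_mult[OF central_constant_q_binomial,
          of m i "m - i" "(\<delta> ^^ i) a" "(\<delta> ^^ (m - i)) b"]
      by (simp add: mult.assoc)
  qed simp
  also have "\<dots> = (\<Sum>i\<le>m. q ^ (m - i) * q_binomial q m i * T (Suc i)) + (\<Sum>i\<le>m. q_binomial q m i * T i)"
    by (rule sum.distrib)
  also have "\<dots> = T 0 + (\<Sum>i\<le>m. q_binomial q (Suc m) (Suc i) * T (Suc i))"
    by (simp add: shift sum.distrib distrib_right)
  also have "\<dots> = (\<Sum>i\<le>Suc m. q_binomial q (Suc m) i * T i)"
    by (simp only: sum.atMost_Suc_shift q_binomial.simps(1) mult_1_left)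
  finally show ?case by (simp only: T_def mult.assoc)
qed simp

lemma delta_funpow_prod_list_mem:
  assumes N: "two_sided_ideal N" "\<sigma> ` N \<subseteq> N" and "set xs \<subseteq> N" "i < length xs"
  shows "(\<delta> ^^ i) (prod_list xs) \<in> N"
  using assms(3,4)
proof (induction xs arbitrary: i rule: rev_induct)
  case (snoc x xs)
  have l: "left_ideal N" using N(1) by (rule two_sided_ideal_left_ideal)
  have "q_binomial q i j * (\<sigma> ^^ (i - j)) ((\<delta> ^^ j) (prod_list xs)) * (\<delta> ^^ (i - j)) x \<in> N"
    if "j \<in> {..i}" for j
  proof (cases "j < length xs")
    case True
    then have "(\<sigma> ^^ (i - j)) ((\<delta> ^^ j) (prod_list xs)) \<in> N"
      using snoc N(2) funpow_image_subset[of \<sigma> N] by simp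
    then show ?thesis
      using l N(1) left_ideal_mult_left two_sided_ideal_mult_right by blast
  next
    case False
    then have "i - j = 0" using that snoc.prems(2) by auto
    then show ?thesis using snoc.prems(1) by (simp add: left_ideal_mult_left[OF l])
  qed
  then have "(\<Sum>j\<le>i. q_binomial q i j * (\<sigma> ^^ (i - j)) ((\<delta> ^^ j) (prod_list xs)) * (\<delta> ^^ (i - j)) x) \<in> N"
    by (rule left_ideal_sum[OF l])
  then show ?case by (simp add: q_leibniz)
qed simp

lemma delta_funpow_prod_list_snoc_congruent:
  assumes N: "two_sided_ideal N" "\<sigma> ` N \<subseteq> N" and xs: "set xs \<subseteq> N" and x: "x \<in> N"
  shows "(\<delta> ^^ Suc (length xs)) (prod_list (xs @ [x]))
    - (\<Sum>j<Suc (length xs). q ^ j) * \<sigma> ((\<delta> ^^ length xs) (prod_list xs)) * \<delta> x \<in> N"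
proof -
  define k where "k = length xs"
  define T where "T i = q_binomial q (Suc k) i * (\<sigma> ^^ (Suc k - i)) ((\<delta> ^^ i) (prod_list xs))
    * (\<delta> ^^ (Suc k - i)) x" for i
  have l: "left_ideal N" using N(1) by (rule two_sided_ideal_left_ideal)
  have "(\<delta> ^^ Suc k) (prod_list (xs @ [x])) = (\<Sum>i\<le>Suc k. T i)"
    unfolding T_def using q_leibniz[of "Suc k" "prod_list xs" x] by simp
  also have "\<dots> = (\<Sum>i<k. T i) + T k + T (Suc k)"
    by (simp only: lessThan_Suc_atMost[symmetric] sum.lessThan_Suc)
  also have "\<dots> = ((\<Sum>i<k. T i) + T (Suc k)) + T k"
    by (simp add: algebra_simps)
  finally have "(\<delta> ^^ Suc k) (prod_list (xs @ [x])) = ((\<Sum>i<k. T i) + T (Suc k)) + T k" .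
  moreover have "T k = (\<Sum>j<Suc k. q ^ j) * \<sigma> ((\<delta> ^^ k) (prod_list xs)) * \<delta> x"
    by (simp add: T_def q_binomial_Suc_self)
  moreover have "(\<Sum>i<k. T i) \<in> N"
  proof (rule left_ideal_sum[OF l])
    fix i assume "i \<in> {..<k}"
    then have "(\<delta> ^^ i) (prod_list xs) \<in> N"
      using delta_funpow_prod_list_mem[OF N xs] by (simp add: k_def)
    then have "(\<sigma> ^^ (Suc k - i)) ((\<delta> ^^ i) (prod_list xs)) \<in> N"
      by (rule funpow_image_subset[OF N(2)])
    then show "T i \<in> N"
      unfolding T_def using left_ideal_mult_left[OF l] two_sided_ideal_mult_right[OF N(1)] by blast
  qed
  moreover have "T (Suc k) \<in> N"
    unfolding T_def using x left_ideal_mult_left[OF l] by simp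
  ultimately show ?thesis
    using left_ideal_add[OF l] by (simp add: k_def)
qed

lemma q_factorial_Suc_twisted_product_snoc:
  "q_factorial q (Suc k) * twisted_product \<sigma> \<delta> (xs @ [x])
    = (\<Sum>j<Suc k. q ^ j) * \<sigma> (q_factorial q k * twisted_product \<sigma> \<delta> xs) * \<delta> x"
  using central_constant_commute[OF central_constant_q_factorial, of k "\<Sum>j<Suc k. q ^ j"]
  by (simp add: q_factorial_Suc twisted_product_snoc sigma_central_constant_mult
      central_constant_q_factorial mult.assoc)

lemma delta_funpow_prod_list_congruent:
  assumes N: "two_sided_ideal N" "\<sigma> ` N \<subseteq> N" and "set xs \<subseteq> N"
  shows "(\<delta> ^^ length xs) (prod_list xs) - q_factorial q (length xs) * twisted_product \<sigma> \<delta> xs \<in> N"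
  using assms(3)
proof (induction xs rule: rev_induct)
  case Nil
  then show ?case
    using left_ideal_zero two_sided_ideal_left_ideal[OF N(1)] by (simp add: q_factorial_def)
next
  case (snoc x xs)
  define Q where "Q = (\<Sum>j<Suc (length xs). q ^ j)"
  define d where "d = (\<delta> ^^ length xs) (prod_list xs) - q_factorial q (length xs) * twisted_product \<sigma> \<delta> xs"
  define lhs where "lhs = (\<delta> ^^ Suc (length xs)) (prod_list (xs @ [x]))"
  have l: "left_ideal N" using N(1) by (rule two_sided_ideal_left_ideal)
  have leibniz: "lhs - Q * \<sigma> ((\<delta> ^^ length xs) (prod_list xs)) * \<delta> x \<in> N"
    unfolding Q_def lhs_def using delta_funpow_prod_list_snoc_congruent[OF N] snoc.prems by simp
  have IH: "Q * \<sigma> d * \<delta> x \<in> N"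
    unfolding d_def using snoc N(2) left_ideal_mult_left[OF l] two_sided_ideal_mult_right[OF N(1)]
    by auto
  have "lhs - q_factorial q (Suc (length xs)) * twisted_product \<sigma> \<delta> (xs @ [x])
      = (lhs - Q * \<sigma> ((\<delta> ^^ length xs) (prod_list xs)) * \<delta> x) + Q * \<sigma> d * \<delta> x"
    by (simp add: d_def Q_def q_factorial_Suc_twisted_product_snoc sigma.diff algebra_simps)
  also have "\<dots> \<in> N"
    using left_ideal_add[OF l leibniz IH] .
  finally show ?case by (simp only: lhs_def length_append_singleton)
qed

lemma prod_delta_eq_twisted_product:
  assumes N: "\<sigma> ` N = N" and "set ts \<subseteq> N"
  shows "\<exists>xs e. set xs \<subseteq> N \<and> length xs = length ts \<and> prod_list (map \<delta> ts) = q ^ e * twisted_product \<sigma> \<delta> xs"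
  using assms(2)
proof (induction ts)
  case Nil
  show ?case by (rule exI[of _ "[]"], rule exI[of _ 0]) simp
next
  case (Cons t ts)
  then obtain xs e where xs: "set xs \<subseteq> N" "length xs = length ts"
    and prod: "prod_list (map \<delta> ts) = q ^ e * twisted_product \<sigma> \<delta> xs"
    by auto
  obtain x where x: "x \<in> N" "t = (\<sigma> ^^ length xs) x"
    using Cons.prems funpow_image_eq[OF N, of "length xs"] by auto
  have "prod_list (map \<delta> (t # ts)) = q ^ length xs * (\<sigma> ^^ length xs) (\<delta> x) * q ^ e * twisted_product \<sigma> \<delta> xs"
    by (simp add: x(2) prod delta_funpow_sigma mult.assoc)
  also have "\<dots> = q ^ (length xs + e) * twisted_product \<sigma> \<delta> (x # xs)"
    using central_constant_commute[OF central_constant_power[OF central_constant_q], of e]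
    by (simp add: power_add mult.assoc)
  finally show ?case using xs x by (intro exI[of _ "x # xs"] exI[of _ "length xs + e"]) simp
qed

lemma image_power_subset_ideal:
  assumes N: "two_sided_ideal N" "\<sigma> ` N = N"
    and vanish: "\<forall>x \<in> ideal_power N n. (\<delta> ^^ n) x = 0" and unit: "ring_unit (q_factorial q n)"
  shows "image_power \<delta> N n \<subseteq> N"
proof -
  have l: "left_ideal N" using N(1) by (rule two_sided_ideal_left_ideal)
  obtain v where v: "v * q_factorial q n = 1" using unit unfolding ring_unit_def by blast
  have twisted: "twisted_product \<sigma> \<delta> xs \<in> N" if xs: "set xs \<subseteq> N" "length xs = n" for xs
  proof -
    have "prod_list xs \<in> ideal_power N n"
      unfolding ideal_power_def using xs by (auto intro: add_closure.elem)
    then have "- (q_factorial q n * twisted_product \<sigma> \<delta> xs) \<in> N"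
      using delta_funpow_prod_list_congruent[OF N(1) _ xs(1)] N(2) vanish xs(2) by simp
    then have "v * (q_factorial q n * twisted_product \<sigma> \<delta> xs) \<in> N"
      using left_ideal_minus[OF l] left_ideal_mult_left[OF l] by fastforce
    then show ?thesis using v by (simp add: mult.assoc[symmetric])
  qed
  show ?thesis
    unfolding image_power_def
  proof (rule add_closure_subset_left_ideal[OF l], rule subsetI)
    fix y assume "y \<in> {prod_list (map \<delta> ts) | ts. length ts = n \<and> set ts \<subseteq> N}"
    then obtain ts where ts: "y = prod_list (map \<delta> ts)" "length ts = n" "set ts \<subseteq> N" by blast
    then obtain xs e where "set xs \<subseteq> N" "length xs = n" "y = q ^ e * twisted_product \<sigma> \<delta> xs"
      using prod_delta_eq_twisted_product[OF N(2) ts(3)] by auto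
    then show "y \<in> N" using twisted left_ideal_mult_left[OF l] by simp
  qed
qed

end

theorem proposition3p1p2:
  fixes q :: "'a::ring_1" and \<sigma> \<delta> :: "'a \<Rightarrow> 'a" and N :: "'a set" and n :: nat
  assumes "noetherian_ring TYPE('a)"
    and "ring_unit q" and "central q"
    and "q_skew_derivation q \<sigma> \<delta>"
    and "sigma_ideal \<sigma> N"
    and "n > 0"
    and "\<forall>x \<in> ideal_power N n. (\<delta> ^^ n) x = 0"
    and "ring_unit (q_factorial q n)"
  shows "image_power \<delta> N n \<subseteq> N \<and> (N = prime_radical \<longrightarrow> \<delta> ` N \<subseteq> N)"
proof -
  interpret q_sigma_derivation q \<sigma> \<delta>
    using assms(3,4) by unfold_locales
  have N: "two_sided_ideal N" "\<sigma> ` N \<subseteq> N"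
    using assms(5) unfolding sigma_ideal_def by blast+
  have "\<sigma> ` N = N"
    using noetherian_ring_automorphism_image_eq[OF assms(1) ring_automorphism_sigma
        two_sided_ideal_left_ideal[OF N(1)] N(2)] .
  then have powers: "image_power \<delta> N n \<subseteq> N"
    using image_power_subset_ideal[OF N(1) _ assms(7,8)] by blast
  have "\<delta> ` N \<subseteq> N" if "N = prime_radical"
    using delta_image_subset_prime_ideal[OF _ two_sided_ideal_left_ideal[OF N(1)] _ order.trans[OF powers]]
      that unfolding prime_radical_def by blast
  with powers show ?thesis by blast
qed

end
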